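(* Let $V$ be a finite-dimensional irreducible $\mathcal U$-module. Then there exist nonzero scalars $\varepsilon_0,\varepsilon_1\in\mathbb K$, a nonnegative integer $d$, and a decomposition $U_0,\dots,U_d$ of $V$ such that $(k_0-\varepsilon_0q^{2i-d}I)U_i=0$ and $(k_1-\varepsilon_1q^{d-2i}I)U_i=0$ for $0\le i\le d$. The sequence $\varepsilon_0,\varepsilon_1;U_0,\dots,U_d$ is unique. Moreover, with $U_{-1}=U_{d+1}=0$, for $0\le i\le d$: $(\varepsilon_0y^+_0-q^{d-2i}I)U_i\subseteq U_{i+1}$, $(\varepsilon_1y^-_1-q^{2i-d}I)U_i\subseteq U_{i+1}$, $(\varepsilon_0y^-_0-q^{d-2i}I)U_i\subseteq U_{i-1}$, $(\varepsilon_1y^+_1-q^{2i-d}I)U_i\subseteq U_{i-1}$.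
   Context: $\mathbb K$ is an algebraically closed field, $q\in\mathbb K$ nonzero and not a root of unity, $[3]_q=\frac{q^3-q^{-3}}{q-q^{-1}}$. $\mathcal U$ (isomorphic to $U_q(\widehat{sl}_2)$) is the unital associative $\mathbb K$-algebra with generators $y^{\pm}_i,k_i^{\pm1}$ ($i\in\{0,1\}$) and relations: $k_ik_i^{-1}=k_i^{-1}k_i=1$; $k_0k_1$ central; $\frac{qy^+_ik_i-q^{-1}k_iy^+_i}{q-q^{-1}}=1$; $\frac{qk_iy^-_i-q^{-1}y^-_ik_i}{q-q^{-1}}=1$; $\frac{qy^-_iy^+_i-q^{-1}y^+_iy^-_i}{q-q^{-1}}=1$; $\frac{qy^+_iy^-_j-q^{-1}y^-_jy^+_i}{q-q^{-1}}=k_0^{-1}k_1^{-1}$ ($i\ne j$); $(y^{\pm}_i)^3y^{\pm}_j-[3]_q(y^{\pm}_i)^2y^{\pm}_jy^{\pm}_i+[3]_qy^{\pm}_iy^{\pm}_j(y^{\pm}_i)^2-y^{\pm}_j(y^{\pm}_i)^3=0$ ($i\ne j$). A decomposition of $V$ is a sequence $U_0,\dots,U_d$ of nonzero subspaces with $V=U_0+\cdots+U_d$ a direct sum. Irreducible modules are nonzero by convention. *)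

theory Defs
  imports Main "HOL-Computational_Algebra.Polynomial"
begin

definition alg_closed_field :: "'k::field itself \<Rightarrow> bool" where
  "alg_closed_field _ \<longleftrightarrow> (\<forall>p::'k poly. degree p \<ge> 1 \<longrightarrow> (\<exists>x. poly p x = 0))"

text \<open>A finite-dimensional K-vector space V, given as the whole type 'v with scalar multiplication scale.\<close>
definition fd_vector_space :: "('k::field \<Rightarrow> 'v::ab_group_add \<Rightarrow> 'v) \<Rightarrow> bool" where
  "fd_vector_space scale \<longleftrightarrow> vector_space scale \<and> (\<exists>B. finite B \<and> module.span scale B = UNIV)"

definition qint3 :: "'k::field \<Rightarrow> 'k" where
  "qint3 q = (q^3 - inverse q ^ 3) / (q - inverse q)"

definition serre :: "('k::field \<Rightarrow> 'v::ab_group_add \<Rightarrow> 'v) \<Rightarrow> 'k \<Rightarrow> ('v \<Rightarrow> 'v) \<Rightarrow> ('v \<Rightarrow> 'v) \<Rightarrow> bool" where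
  "serre scale q a b \<longleftrightarrow> (\<forall>v.
      a (a (a (b v))) - scale (qint3 q) (a (a (b (a v))))
    + scale (qint3 q) (a (b (a (a v)))) - b (a (a (a v))) = 0)"

definition qrel :: "('k::field \<Rightarrow> 'v::ab_group_add \<Rightarrow> 'v) \<Rightarrow> 'k \<Rightarrow> ('v \<Rightarrow> 'v) \<Rightarrow> ('v \<Rightarrow> 'v) \<Rightarrow> ('v \<Rightarrow> 'v) \<Rightarrow> bool" where
  "qrel scale q x z w \<longleftrightarrow> (\<forall>v.
      scale (inverse (q - inverse q)) (scale q (x (z v)) - scale (inverse q) (z (x v))) = w v)"

text \<open>A U-module structure on V: operators for the generators
  yp0 = y^+_0, yp1 = y^+_1, ym0 = y^-_0, ym1 = y^-_1, k0, k1, k0i = k_0^{-1}, k1i = k_1^{-1},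
  all linear, satisfying the defining relations of the algebra U.\<close>
definition U_module ::
  "('k::field \<Rightarrow> 'v::ab_group_add \<Rightarrow> 'v) \<Rightarrow> 'k \<Rightarrow>
   ('v \<Rightarrow> 'v) \<Rightarrow> ('v \<Rightarrow> 'v) \<Rightarrow> ('v \<Rightarrow> 'v) \<Rightarrow> ('v \<Rightarrow> 'v) \<Rightarrow>
   ('v \<Rightarrow> 'v) \<Rightarrow> ('v \<Rightarrow> 'v) \<Rightarrow> ('v \<Rightarrow> 'v) \<Rightarrow> ('v \<Rightarrow> 'v) \<Rightarrow> bool" where
  "U_module scale q yp0 yp1 ym0 ym1 k0 k1 k0i k1i \<longleftrightarrow>
     (\<forall>f \<in> {yp0, yp1, ym0, ym1, k0, k1, k0i, k1i}. Vector_Spaces.linear scale scale f) \<and>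
     k0 \<circ> k0i = id \<and> k0i \<circ> k0 = id \<and> k1 \<circ> k1i = id \<and> k1i \<circ> k1 = id \<and>
     (\<forall>g \<in> {yp0, yp1, ym0, ym1, k0, k1, k0i, k1i}. (k0 \<circ> k1) \<circ> g = g \<circ> (k0 \<circ> k1)) \<and>
     qrel scale q yp0 k0 id \<and> qrel scale q yp1 k1 id \<and>
     qrel scale q k0 ym0 id \<and> qrel scale q k1 ym1 id \<and>
     qrel scale q ym0 yp0 id \<and> qrel scale q ym1 yp1 id \<and>
     qrel scale q yp0 ym1 (k0i \<circ> k1i) \<and> qrel scale q yp1 ym0 (k0i \<circ> k1i) \<and>
     serre scale q yp0 yp1 \<and> serre scale q yp1 yp0 \<and>
     serre scale q ym0 ym1 \<and> serre scale q ym1 ym0"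

definition U_irreducible ::
  "('k::field \<Rightarrow> 'v::ab_group_add \<Rightarrow> 'v) \<Rightarrow>
   ('v \<Rightarrow> 'v) \<Rightarrow> ('v \<Rightarrow> 'v) \<Rightarrow> ('v \<Rightarrow> 'v) \<Rightarrow> ('v \<Rightarrow> 'v) \<Rightarrow>
   ('v \<Rightarrow> 'v) \<Rightarrow> ('v \<Rightarrow> 'v) \<Rightarrow> ('v \<Rightarrow> 'v) \<Rightarrow> ('v \<Rightarrow> 'v) \<Rightarrow> bool" where
  "U_irreducible scale yp0 yp1 ym0 ym1 k0 k1 k0i k1i \<longleftrightarrow>
     (UNIV :: 'v set) \<noteq> {0} \<and>
     (\<forall>W. module.subspace scale W \<and>
          (\<forall>g \<in> {yp0, yp1, ym0, ym1, k0, k1, k0i, k1i}. g ` W \<subseteq> W)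
          \<longrightarrow> W = {0} \<or> W = UNIV)"

definition decomposition :: "('k::field \<Rightarrow> 'v::ab_group_add \<Rightarrow> 'v) \<Rightarrow> nat \<Rightarrow> (nat \<Rightarrow> 'v set) \<Rightarrow> bool" where
  "decomposition scale d U \<longleftrightarrow>
     (\<forall>i\<le>d. module.subspace scale (U i) \<and> U i \<noteq> {0}) \<and>
     (\<forall>v. \<exists>!u::nat \<Rightarrow> 'v. (\<forall>i\<le>d. u i \<in> U i) \<and> (\<forall>i>d. u i = 0) \<and> v = (\<Sum>i\<le>d. u i))"

definition weight_decomp ::
  "('k::field \<Rightarrow> 'v::ab_group_add \<Rightarrow> 'v) \<Rightarrow> 'k \<Rightarrow> ('v \<Rightarrow> 'v) \<Rightarrow> ('v \<Rightarrow> 'v) \<Rightarrow>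
   'k \<Rightarrow> 'k \<Rightarrow> nat \<Rightarrow> (nat \<Rightarrow> 'v set) \<Rightarrow> bool" where
  "weight_decomp scale q k0 k1 e0 e1 d U \<longleftrightarrow>
     e0 \<noteq> 0 \<and> e1 \<noteq> 0 \<and> decomposition scale d U \<and>
     (\<forall>i\<le>d. \<forall>u\<in>U i.
        k0 u = scale (e0 * q powi (2 * int i - int d)) u \<and>
        k1 u = scale (e1 * q powi (int d - 2 * int i)) u)"

end

theory Submission
  imports Defs
begin

(* Since k0 k1 is central, Schur's lemma makes it a nonzero scalar c, so the k0-eigenspace
   E(l) is also the k1-eigenspace for c / l. The q-commutation relations show that
   y+0 - 1/l and y-1 - l/c map E(l) into E(l q^2), while y-0 - 1/l and y+1 - l/c map it
   into E(l / q^2). Over an algebraically closed field k0 has an eigenvalue; as k0 has only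
   finitely many eigenvalues and q is not a root of unity, the q^2-string through it breaks
   off in both directions, giving eigenvalues e q^(2i - d), 0 <= i <= d, with the two
   neighbours of the string not eigenvalues. The sum of these eigenspaces is therefore a
   nonzero submodule, hence everything, and the sum is direct. Conversely any decomposition
   as in the theorem consists of k0-eigenspaces and lists all eigenvalues of k0, and this
   set of eigenvalues determines e and d. *)

lemma nat_maximal_run:
  assumes "P 0" and "\<not> P n"
  obtains m where "\<forall>i\<le>m. P i" and "\<not> P (Suc m)"
proof -
  define k where "k = (LEAST k. \<not> P k)"
  have k: "\<not> P k" unfolding k_def by (rule LeastI[of "\<lambda>k. \<not> P k", OF assms(2)])
  have below: "P i" if "i < k" for i
    using not_less_Least[of i "\<lambda>k. \<not> P k"] that unfolding k_def by blast
  have "k \<noteq> 0" using assms(1) k by (cases k) auto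
  then have "\<forall>i\<le>k - 1. P i" and "\<not> P (Suc (k - 1))" using below k by auto
  then show thesis by (rule that)
qed

section \<open>Integer powers of a non-root of unity\<close>

lemma power_int_eq_1_iff:
  fixes q :: "'k::field"
  assumes "q \<noteq> 0" and "\<forall>n::nat. n > 0 \<longrightarrow> q ^ n \<noteq> 1"
  shows "q powi n = 1 \<longleftrightarrow> n = 0"
proof
  assume q_n: "q powi n = 1"
  have "q ^ nat \<bar>n\<bar> = 1"
  proof (cases "n \<ge> 0")
    case True
    then show ?thesis using q_n by (simp add: power_int_def)
  next
    case False
    then have "inverse q ^ nat (- n) = 1" using q_n by (simp add: power_int_def)
    then have "q ^ nat (- n) = 1" by (simp only: power_inverse inverse_eq_1_iff)
    then show ?thesis using False by simp
  qed
  then show "n = 0" using assms(2) by (cases "n = 0") auto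
qed simp

lemma power_int_inj:
  fixes q :: "'k::field"
  assumes "q \<noteq> 0" and "\<forall>n::nat. n > 0 \<longrightarrow> q ^ n \<noteq> 1"
  shows "q powi a = q powi b \<longleftrightarrow> a = b"
  using power_int_eq_1_iff[OF assms, of "a - b"] assms(1) by (auto simp: power_int_diff)

lemma inj_power_not_root_of_unity:
  fixes r :: "'k::field"
  assumes "r \<noteq> 0" and "\<forall>n::nat. n > 0 \<longrightarrow> r ^ n \<noteq> 1"
  shows "inj (\<lambda>n::nat. r ^ n)"
proof (rule injI)
  fix i j assume "r ^ i = r ^ j"
  then have "r powi int i = r powi int j" by simp
  then show "i = j" by (simp only: power_int_inj[OF assms] of_nat_eq_iff)
qed

text \<open>The eigenvalue \<open>\<epsilon>\<^sub>0 q\<^sup>2\<^sup>i\<^sup>-\<^sup>d\<close> of \<open>k0\<close> on \<open>U\<^sub>i\<close>.\<close>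
definition weight :: "'k::field \<Rightarrow> 'k \<Rightarrow> nat \<Rightarrow> nat \<Rightarrow> 'k" where
  "weight q e d i = e * q powi (2 * int i - int d)"

lemma weight_Suc:
  assumes "q \<noteq> 0" shows "weight q e d (Suc i) = weight q e d i * q^2"
proof -
  have "q powi (2 * int (Suc i) - int d) = q powi ((2 * int i - int d) + 2)"
    by (simp add: algebra_simps)
  also have "\<dots> = q powi (2 * int i - int d) * q powi 2"
    using assms by (rule power_int_add[OF disjI1])
  finally show ?thesis by (simp add: weight_def mult.assoc)
qed

lemma weight_nonzero: "q \<noteq> 0 \<Longrightarrow> e \<noteq> 0 \<Longrightarrow> weight q e d i \<noteq> 0"
  by (simp add: weight_def)

lemma weight_div: "e \<noteq> 0 \<Longrightarrow> weight q e d i / e = q powi (2 * int i - int d)"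
  by (simp add: weight_def)

lemma inverse_weight: "inverse (weight q e d i) = inverse e * q powi (int d - 2 * int i)"
proof -
  have "inverse (q powi (2 * int i - int d)) = q powi (- (2 * int i - int d))"
    by (simp only: power_int_minus)
  then show ?thesis by (simp add: weight_def)
qed

lemma weight_eq_weight_iff:
  assumes "q \<noteq> 0"
  shows "weight q e d i = weight q e' d j \<longleftrightarrow> e * q powi (2 * int i) = e' * q powi (2 * int j)"
  using assms by (simp add: weight_def power_int_diff field_simps)

lemma weight_shift:
  assumes "q \<noteq> 0" shows "weight q (e * q ^ d) d i = e * (q^2) ^ i"
proof -
  have "q ^ d * q powi (2 * int i - int d) = q powi (int d + (2 * int i - int d))"
    by (simp only: power_int_add[OF disjI1[OF assms]] power_int_of_nat)
  also have "\<dots> = q powi int (2 * i)" by simp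
  also have "\<dots> = (q^2) ^ i" by (simp only: power_int_of_nat power_mult)
  finally show ?thesis by (simp add: weight_def mult.assoc)
qed

lemma inj_weight:
  assumes "q \<noteq> 0" and "\<forall>n::nat. n > 0 \<longrightarrow> q ^ n \<noteq> 1" and "e \<noteq> 0"
  shows "inj (weight q e d)"
  using assms by (auto intro!: injI simp: weight_eq_weight_iff power_int_inj)

lemma weight_image_eq_imp_eq:
  assumes q: "q \<noteq> 0" "\<forall>n::nat. n > 0 \<longrightarrow> q ^ n \<noteq> 1" and "e \<noteq> 0" "e' \<noteq> 0"
    and image: "weight q e d ` {..d} = weight q e' d' ` {..d'}"
  shows "e = e' \<and> d = d'"
proof -
  have "Suc d = Suc d'"
    using arg_cong[OF image, of card] inj_weight[OF q] assms(3,4)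
    by (simp add: card_image inj_on_subset[OF _ subset_UNIV])
  then have d: "d' = d" by simp
  have "weight q e d 0 \<in> weight q e' d ` {..d}" using image d by blast
  then obtain j where "weight q e d 0 = weight q e' d j" by blast
  then have e: "e = e' * q powi (2 * int j)" using q(1) by (simp add: weight_eq_weight_iff)
  have "weight q e' d 0 \<in> weight q e d ` {..d}" using image d by blast
  then obtain i where "weight q e' d 0 = weight q e d i" by blast
  then have e': "e' = e * q powi (2 * int i)" using q(1) by (simp add: weight_eq_weight_iff)
  have "e * 1 = e * q powi (2 * int i + 2 * int j)"
    using e e' q(1) by (simp add: power_int_add)
  then have "q powi (2 * int i + 2 * int j) = 1" using assms(3) by simp
  then have "j = 0" using power_int_eq_1_iff[OF q] by simp
  then show ?thesis using e d by simp
qed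

section \<open>Eigenspaces of linear endomorphisms\<close>

definition eigenspace :: "('k::field \<Rightarrow> 'v::ab_group_add \<Rightarrow> 'v) \<Rightarrow> ('v \<Rightarrow> 'v) \<Rightarrow> 'k \<Rightarrow> 'v set" where
  "eigenspace scale T l = {v. T v = scale l v}"

definition eigenvalue :: "('k::field \<Rightarrow> 'v::ab_group_add \<Rightarrow> 'v) \<Rightarrow> ('v \<Rightarrow> 'v) \<Rightarrow> 'k \<Rightarrow> bool" where
  "eigenvalue scale T l \<longleftrightarrow> (\<exists>v. v \<noteq> 0 \<and> T v = scale l v)"

definition poly_apply :: "('k::field \<Rightarrow> 'v::ab_group_add \<Rightarrow> 'v) \<Rightarrow> ('v \<Rightarrow> 'v) \<Rightarrow> 'k poly \<Rightarrow> 'v \<Rightarrow> 'v" where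
  "poly_apply scale T p v = (\<Sum>i\<le>degree p. scale (coeff p i) ((T ^^ i) v))"

context vector_space
begin

interpretation endo: vector_space_pair scale scale ..

lemma subspace_eigenspace:
  assumes "Vector_Spaces.linear scale scale T" shows "subspace (eigenspace scale T l)"
  unfolding eigenspace_def
  by (rule subspaceI)
    (auto simp: endo.linear_add[OF assms] endo.linear_scale[OF assms] endo.linear_0[OF assms]
      scale_right_distrib scale_left_commute)

lemma eigenspace_eq_0_iff:
  assumes "Vector_Spaces.linear scale scale T"
  shows "eigenspace scale T l = {0} \<longleftrightarrow> \<not> eigenvalue scale T l"
  using subspace_0[OF subspace_eigenspace[OF assms]]
  unfolding eigenvalue_def eigenspace_def by blast

lemma eigenvectors_sum_eq_0:
  assumes T: "Vector_Spaces.linear scale scale T"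
  shows "finite I \<Longrightarrow> inj_on \<mu> I \<Longrightarrow> \<forall>i\<in>I. u i \<in> eigenspace scale T (\<mu> i) \<Longrightarrow>
    (\<Sum>i\<in>I. u i) = 0 \<Longrightarrow> \<forall>i\<in>I. u i = 0"
proof (induction I arbitrary: u rule: finite_induct)
  case (insert a F)
  have eig: "T (u i) = \<mu> i *s u i" if "i \<in> insert a F" for i
    using insert.prems(2) that by (auto simp: eigenspace_def)
  have u_a: "(\<Sum>i\<in>F. u i) = - u a"
    using insert.prems(3) insert.hyps by (simp add: add_eq_0_iff)
  \<comment> \<open>Applying \<open>T - \<mu> a\<close> kills the \<open>a\<close>-term and rescales the others by nonzero factors.\<close>
  define u' where "u' i = (\<mu> i - \<mu> a) *s u i" for i
  have "(\<Sum>i\<in>F. u' i) = T (\<Sum>i\<in>F. u i) - \<mu> a *s (\<Sum>i\<in>F. u i)"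
    using eig by (simp add: u'_def endo.linear_sum[OF T] scale_left_diff_distrib sum_subtractf
        scale_sum_right)
  also have "\<dots> = 0" using eig[of a] by (simp add: u_a endo.linear_neg[OF T])
  finally have "\<forall>i\<in>F. u' i = 0"
    using insert.IH[of u'] insert.prems(1,2) inj_on_subset[OF insert.prems(1)]
    by (auto simp: u'_def eigenspace_def endo.linear_scale[OF T] scale_left_commute eig)
  moreover have "\<forall>i\<in>F. \<mu> i \<noteq> \<mu> a" using insert.prems(1) insert.hyps by (auto simp: inj_on_def)
  ultimately have "\<forall>i\<in>F. u i = 0" by (simp add: u'_def)
  then show ?case using u_a by simp
qed simp

lemma subspace_sum_family:
  fixes d :: nat
  assumes "\<forall>i\<le>d. subspace (S i)"
  shows "subspace {v. \<exists>u. (\<forall>i\<le>d. u i \<in> S i) \<and> v = (\<Sum>i\<le>d. u i)}" (is "subspace ?W")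
proof (rule subspaceI)
  show "0 \<in> ?W" using assms by (auto intro!: exI[of _ "\<lambda>_. 0"] subspace_0)
next
  fix x y assume "x \<in> ?W" and "y \<in> ?W"
  then obtain u u' where "\<forall>i\<le>d. u i \<in> S i" "x = (\<Sum>i\<le>d. u i)"
    "\<forall>i\<le>d. u' i \<in> S i" "y = (\<Sum>i\<le>d. u' i)" by blast
  then show "x + y \<in> ?W"
    using assms by (auto intro!: exI[of _ "\<lambda>i. u i + u' i"] subspace_add simp: sum.distrib)
next
  fix c x assume "x \<in> ?W"
  then obtain u where "\<forall>i\<le>d. u i \<in> S i" "x = (\<Sum>i\<le>d. u i)" by blast
  then show "c *s x \<in> ?W"
    using assms by (auto intro!: exI[of _ "\<lambda>i. c *s u i"] subspace_scale simp: scale_sum_right)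
qed

lemma eigenvector_components_eq_0:
  fixes d :: nat
  assumes T: "Vector_Spaces.linear scale scale T" and inj: "inj_on \<mu> {..d}"
    and u: "\<forall>j\<le>d. u j \<in> eigenspace scale T (\<mu> j)"
    and w: "w = (\<Sum>j\<le>d. u j)" "w \<in> eigenspace scale T l"
  shows "\<forall>j\<le>d. \<mu> j \<noteq> l \<longrightarrow> u j = 0"
proof -
  have eig: "T (u j) = \<mu> j *s u j" if "j \<le> d" for j
    using u that by (simp add: eigenspace_def)
  have "\<forall>j\<in>{..d}. (\<mu> j - l) *s u j = 0"
  proof (rule eigenvectors_sum_eq_0[OF T _ inj])
    show "\<forall>j\<in>{..d}. (\<mu> j - l) *s u j \<in> eigenspace scale T (\<mu> j)"
      using eig by (simp add: eigenspace_def endo.linear_scale[OF T] scale_left_commute)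
    have "(\<Sum>j\<le>d. (\<mu> j - l) *s u j) = T w - l *s w"
      using eig by (simp add: w(1) endo.linear_sum[OF T] scale_left_diff_distrib sum_subtractf
          scale_sum_right)
    then show "(\<Sum>j\<in>{..d}. (\<mu> j - l) *s u j) = 0" using w(2) by (simp add: eigenspace_def)
  qed simp
  then show ?thesis by auto
qed

lemma decomposition_into_eigenspaces:
  fixes d :: nat
  assumes T: "Vector_Spaces.linear scale scale T" and inj: "inj_on \<mu> {..d}"
    and nonzero: "\<forall>i\<le>d. eigenvalue scale T (\<mu> i)"
    and spanning: "\<forall>v. \<exists>u. (\<forall>i\<le>d. u i \<in> eigenspace scale T (\<mu> i)) \<and> v = (\<Sum>i\<le>d. u i)"
  shows "decomposition scale d (\<lambda>i. eigenspace scale T (\<mu> i))"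
  unfolding decomposition_def
proof (intro conjI allI impI)
  fix i assume "i \<le> d"
  then show "subspace (eigenspace scale T (\<mu> i))" "eigenspace scale T (\<mu> i) \<noteq> {0}"
    using subspace_eigenspace[OF T] nonzero by (auto simp: eigenvalue_def eigenspace_def)
next
  fix v
  obtain u where u: "\<forall>i\<le>d. u i \<in> eigenspace scale T (\<mu> i)" "v = (\<Sum>i\<le>d. u i)"
    using spanning by blast
  let ?comp = "\<lambda>u. (\<forall>i\<le>d. u i \<in> eigenspace scale T (\<mu> i)) \<and> (\<forall>i>d. u i = 0) \<and> v = (\<Sum>i\<le>d. u i)"
  show "\<exists>!u. ?comp u"
  proof (rule ex1I)
    show "?comp (\<lambda>i. if i \<le> d then u i else 0)" using u by simp
  next
    fix u' assume u': "?comp u'"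
    have "\<forall>i\<in>{..d}. u' i - u i = 0"
      by (rule eigenvectors_sum_eq_0[OF T _ inj])
        (use u u' subspace_diff[OF subspace_eigenspace[OF T]] in \<open>simp_all add: sum_subtractf\<close>)
    then show "u' = (\<lambda>i. if i \<le> d then u i else 0)" using u' by auto
  qed
qed

lemma decomposition_eigenspaces_eq:
  fixes d :: nat
  assumes T: "Vector_Spaces.linear scale scale T" and inj: "inj_on \<mu> {..d}"
    and dec: "decomposition scale d U" and U: "\<forall>i\<le>d. U i \<subseteq> eigenspace scale T (\<mu> i)"
  shows "\<forall>i\<le>d. U i = eigenspace scale T (\<mu> i)"
    and "eigenvalue scale T l \<longleftrightarrow> l \<in> \<mu> ` {..d}"
proof -
  have components: "\<exists>u. (\<forall>j\<le>d. u j \<in> U j) \<and> w = (\<Sum>j\<le>d. u j)" for w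
    using dec unfolding decomposition_def by blast
  have U_eig: "\<forall>j\<le>d. u j \<in> eigenspace scale T (\<mu> j)" if "\<forall>j\<le>d. u j \<in> U j" for u
    using that U by blast
  show "\<forall>i\<le>d. U i = eigenspace scale T (\<mu> i)"
  proof (intro allI impI equalityI subsetI)
    fix i w assume i: "i \<le> d" and w: "w \<in> eigenspace scale T (\<mu> i)"
    obtain u where u: "\<forall>j\<le>d. u j \<in> U j" "w = (\<Sum>j\<le>d. u j)" using components by blast
    have "u j = 0" if "j \<le> d" "j \<noteq> i" for j
    proof -
      have "\<mu> j \<noteq> \<mu> i" using inj i that unfolding inj_on_def by blast
      then show ?thesis
        using eigenvector_components_eq_0[OF T inj U_eig[OF u(1)] u(2) w] that(1) by blast
    qed
    then have "w = u i" using u(2) i by (simp add: sum.remove[of "{..d}" i])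
    then show "w \<in> U i" using u(1) i by simp
  qed (use U in blast)
  show "eigenvalue scale T l \<longleftrightarrow> l \<in> \<mu> ` {..d}"
  proof
    assume "eigenvalue scale T l"
    then obtain w where w: "w \<in> eigenspace scale T l" "w \<noteq> 0"
      unfolding eigenvalue_def eigenspace_def by blast
    obtain u where u: "\<forall>j\<le>d. u j \<in> U j" "w = (\<Sum>j\<le>d. u j)" using components by blast
    show "l \<in> \<mu> ` {..d}"
    proof (rule ccontr)
      assume "l \<notin> \<mu> ` {..d}"
      then have "\<forall>j\<le>d. \<mu> j \<noteq> l" by auto
      then have "\<forall>j\<le>d. u j = 0"
        using eigenvector_components_eq_0[OF T inj U_eig[OF u(1)] u(2) w(1)] by blast
      then show False using u(2) w(2) by simp
    qed
  next
    assume "l \<in> \<mu> ` {..d}"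
    then obtain i where i: "i \<le> d" "l = \<mu> i" by blast
    then have "subspace (U i)" "U i \<noteq> {0}" using dec unfolding decomposition_def by auto
    then obtain x where "x \<in> U i" "x \<noteq> 0" using subspace_0 by blast
    then show "eigenvalue scale T l" using U i unfolding eigenvalue_def eigenspace_def by blast
  qed
qed

lemma qrel_swap: "qrel scale q x z w \<longleftrightarrow> qrel scale (inverse q) z x w"
proof -
  have "inverse (inverse q - inverse (inverse q)) *s (inverse q *s a - inverse (inverse q) *s b)
      = inverse (q - inverse q) *s (q *s b - inverse q *s a)" for a b
  proof -
    have "inverse (inverse q - q) = - inverse (q - inverse q)"
      by (metis inverse_minus_eq minus_diff_eq)
    moreover have "inverse q *s a - q *s b = - (q *s b - inverse q *s a)" by simp
    ultimately show ?thesis by (simp flip: scale_minus_right)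
  qed
  then show ?thesis by (simp add: qrel_def)
qed

lemma qrel_eigenspace_shift:
  assumes rel: "qrel scale q y k id" and q: "q - inverse q \<noteq> 0"
    and y: "Vector_Spaces.linear scale scale y" and k: "Vector_Spaces.linear scale scale k"
    and v: "v \<in> eigenspace scale k l" and l: "l \<noteq> 0"
  shows "y v - inverse l *s v \<in> eigenspace scale k (l * q^2)"
proof -
  have q0: "q \<noteq> 0" using q by auto
  have kv: "k v = l *s v" using v by (simp add: eigenspace_def)
  have "(q - inverse q) *s v = q *s y (k v) - inverse q *s k (y v)"
    using rel q unfolding qrel_def id_def by (metis scale_scale right_inverse scale_one)
  then have "inverse q *s k (y v) = (q * l) *s y v - (q - inverse q) *s v"
    by (simp add: kv endo.linear_scale[OF y] algebra_simps)
  then have "k (y v) = q *s ((q * l) *s y v - (q - inverse q) *s v)"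
    using q0 by (metis scale_scale right_inverse scale_one)
  also have "\<dots> = (q * q * l) *s y v - (q * q - 1) *s v"
    using q0 by (simp add: scale_right_diff_distrib right_diff_distrib mult.assoc)
  finally have "k (y v) = (q * q * l) *s y v - (q * q - 1) *s v" .
  then have "k (y v - inverse l *s v) = (q * q * l) *s y v - (q * q) *s v"
    using l by (simp add: endo.linear_diff[OF k] endo.linear_scale[OF k] kv algebra_simps)
  also have "\<dots> = (l * q^2) *s (y v - inverse l *s v)"
    using l by (simp add: scale_right_diff_distrib power2_eq_square mult.commute mult.left_commute)
  finally show ?thesis by (simp add: eigenspace_def)
qed

lemma eigenspace_left_inverse:
  assumes "Vector_Spaces.linear scale scale S" and "\<forall>v. S (T v) = v"
    and "v \<in> eigenspace scale T l" and "l \<noteq> 0"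
  shows "S v = inverse l *s v"
proof -
  have "v = S (T v)" using assms(2) by simp
  also have "\<dots> = l *s S v"
    using assms(3) endo.linear_scale[OF assms(1)] by (simp add: eigenspace_def)
  finally have "inverse l *s v = inverse l *s (l *s S v)" by simp
  then show ?thesis using assms(4) by simp
qed

lemma poly_apply_bound:
  "degree p \<le> n \<Longrightarrow> poly_apply scale T p v = (\<Sum>i\<le>n. coeff p i *s (T ^^ i) v)"
  unfolding poly_apply_def by (rule sum.mono_neutral_left) (auto simp: coeff_eq_0)

lemma poly_apply_linear_factor:
  assumes T: "Vector_Spaces.linear scale scale T"
  shows "poly_apply scale T ([:-r, 1:] * g) v = T (poly_apply scale T g v) - r *s poly_apply scale T g v"
proof -
  let ?n = "Suc (degree g)"
  have "degree ([:-r, 1:] * g) \<le> ?n"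
    using degree_mult_le[of "[:-r, 1:]" g] by simp
  then have "poly_apply scale T ([:-r, 1:] * g) v
      = (\<Sum>i\<le>?n. coeff (pCons 0 g) i *s (T ^^ i) v) - (\<Sum>i\<le>?n. coeff (smult r g) i *s (T ^^ i) v)"
    by (simp add: poly_apply_bound scale_left_diff_distrib sum_subtractf)
  also have "(\<Sum>i\<le>?n. coeff (smult r g) i *s (T ^^ i) v) = r *s poly_apply scale T g v"
    by (simp add: poly_apply_bound[of g ?n] scale_sum_right coeff_eq_0)
  also have "(\<Sum>i\<le>?n. coeff (pCons 0 g) i *s (T ^^ i) v) = (\<Sum>i\<le>degree g. coeff g i *s T ((T ^^ i) v))"
    by (subst sum.atMost_Suc_shift) simp
  also have "\<dots> = T (poly_apply scale T g v)"
    by (simp add: poly_apply_def endo.linear_sum[OF T] endo.linear_scale[OF T])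
  finally show ?thesis .
qed

lemma eigenvalue_if_poly_apply_eq_0:
  assumes closed: "alg_closed_field TYPE('a)" and T: "Vector_Spaces.linear scale scale T"
  shows "p \<noteq> 0 \<Longrightarrow> v \<noteq> 0 \<Longrightarrow> poly_apply scale T p v = 0 \<Longrightarrow> \<exists>l. eigenvalue scale T l"
proof (induction "degree p" arbitrary: p v rule: less_induct)
  case less
  show ?case
  proof (cases "degree p = 0")
    case True
    then have "poly_apply scale T p v = coeff p 0 *s v" by (simp add: poly_apply_def)
    moreover have "coeff p 0 \<noteq> 0" using less.prems(1) True leading_coeff_0_iff[of p] by simp
    ultimately show ?thesis using less.prems(2,3) by simp
  next
    case False
    then obtain r where "poly p r = 0"
      using closed unfolding alg_closed_field_def by (metis One_nat_def Suc_leI neq0_conv)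
    then obtain g where p: "p = [:-r, 1:] * g" by (metis dvdE poly_eq_0_iff_dvd)
    have "g \<noteq> 0" using p less.prems(1) by auto
    have "degree g < degree p"
      using p \<open>g \<noteq> 0\<close> degree_mult_eq[of "[:-r, 1:]" g] by (simp del: mult_pCons_left)
    show ?thesis
    proof (cases "poly_apply scale T g v = 0")
      case True
      then show ?thesis using less.hyps[OF \<open>degree g < degree p\<close> \<open>g \<noteq> 0\<close> less.prems(2)] by blast
    next
      case False
      have "T (poly_apply scale T g v) = r *s poly_apply scale T g v"
        using less.prems(3) poly_apply_linear_factor[OF T] p by simp
      then show ?thesis using False unfolding eigenvalue_def by blast
    qed
  qed
qed

end

context finite_dimensional_vector_space
begin

interpretation endo: vector_space_pair scale scale ..

lemma nontrivial_linear_relation: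
  "\<exists>c. (\<exists>i\<le>dimension. c i \<noteq> 0) \<and> (\<Sum>i\<le>dimension. c i *s f i) = 0"
proof (cases "inj_on f {..dimension}")
  case True
  have "\<not> independent (f ` {..dimension})"
  proof
    assume "independent (f ` {..dimension})"
    then have "card (f ` {..dimension}) \<le> dimension"
      using independent_card_le_dim[of _ UNIV] by (simp add: dimension_def)
    then show False using True by (simp add: card_image)
  qed
  then obtain t u w where t: "finite t" "t \<subseteq> f ` {..dimension}" "(\<Sum>v\<in>t. u v *s v) = 0"
    and w: "w \<in> t" "u w \<noteq> 0"
    unfolding dependent_explicit by blast
  define J where "J = {i \<in> {..dimension}. f i \<in> t}"
  have t_J: "t = f ` J" using t(2) unfolding J_def by auto
  have inj_J: "inj_on f J" using True unfolding J_def by (auto intro: inj_on_subset)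
  define c where "c i = (if i \<in> J then u (f i) else 0)" for i
  have "(\<Sum>i\<le>dimension. c i *s f i) = (\<Sum>i\<in>J. u (f i) *s f i)"
    by (rule sum.mono_neutral_cong_right) (auto simp: J_def c_def)
  also have "\<dots> = 0" using t(3) by (simp add: t_J sum.reindex[OF inj_J])
  finally have "(\<Sum>i\<le>dimension. c i *s f i) = 0" .
  moreover obtain i where "i \<in> J" "f i = w" using w(1) t_J by auto
  then have "i \<le> dimension" "c i \<noteq> 0" using w(2) by (auto simp: J_def c_def)
  ultimately show ?thesis by blast
next
  case False
  then obtain i j where ij: "i \<le> dimension" "j \<le> dimension" "i \<noteq> j" "f i = f j"
    unfolding inj_on_def by auto
  define c :: "nat \<Rightarrow> 'a" where "c k = (if k = i then 1 else if k = j then -1 else 0)" for k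
  have "(\<Sum>k\<le>dimension. c k *s f k) = (\<Sum>k\<in>{i, j}. c k *s f k)"
    by (rule sum.mono_neutral_right) (use ij in \<open>auto simp: c_def\<close>)
  also have "\<dots> = 0" using ij by (simp add: c_def)
  finally have "(\<Sum>k\<le>dimension. c k *s f k) = 0" .
  moreover have "c i \<noteq> 0" by (simp add: c_def)
  ultimately show ?thesis using ij(1) by blast
qed

lemma eigenvalue_exists:
  assumes closed: "alg_closed_field TYPE('a)" and T: "Vector_Spaces.linear scale scale T"
    and nontrivial: "(UNIV :: 'b set) \<noteq> {0}"
  obtains l where "eigenvalue scale T l"
proof -
  obtain v :: 'b where "v \<noteq> 0" using nontrivial by auto
  obtain c where c: "\<exists>i\<le>dimension. c i \<noteq> 0" "(\<Sum>i\<le>dimension. c i *s (T ^^ i) v) = 0"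
    using nontrivial_linear_relation[of "\<lambda>i. (T ^^ i) v"] by blast
  define p where "p = (\<Sum>i\<le>dimension. monom (c i) i)"
  have coeff_p: "coeff p i = (if i \<le> dimension then c i else 0)" for i
    unfolding p_def coeff_sum by (simp add: sum.delta')
  have "p \<noteq> 0"
  proof
    assume "p = 0"
    then have "c i = 0" if "i \<le> dimension" for i using coeff_p[of i] that by simp
    then show False using c(1) by blast
  qed
  have "degree p \<le> dimension" by (rule degree_le) (simp add: coeff_p)
  then have "poly_apply scale T p v = 0" using c(2) by (simp add: poly_apply_bound coeff_p)
  then show thesis
    using eigenvalue_if_poly_apply_eq_0[OF closed T \<open>p \<noteq> 0\<close> \<open>v \<noteq> 0\<close>] that by blast
qed

lemma finite_eigenvalues:
  assumes T: "Vector_Spaces.linear scale scale T"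
  shows "finite {l. eigenvalue scale T l}"
proof (rule ccontr)
  assume "infinite {l. eigenvalue scale T l}"
  then obtain S where S: "finite S" "card S = Suc dimension" "S \<subseteq> {l. eigenvalue scale T l}"
    using infinite_arbitrarily_large by blast
  define f where "f l = (SOME v. v \<noteq> 0 \<and> T v = l *s v)" for l
  have f: "f l \<noteq> 0 \<and> f l \<in> eigenspace scale T l" if "l \<in> S" for l
    using someI_ex[of "\<lambda>v. v \<noteq> 0 \<and> T v = l *s v"] S(3) that
    unfolding f_def eigenvalue_def eigenspace_def by blast
  have inj: "inj_on f S"
  proof (rule inj_onI)
    fix l l' assume "l \<in> S" "l' \<in> S" "f l = f l'"
    have "T (f l) = l *s f l" using f[OF \<open>l \<in> S\<close>] by (simp add: eigenspace_def)
    moreover have "T (f l) = l' *s f l"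
      using f[OF \<open>l' \<in> S\<close>] \<open>f l = f l'\<close> by (simp add: eigenspace_def)
    ultimately have "l *s f l = l' *s f l" by auto
    then show "l = l'" using f[OF \<open>l \<in> S\<close>] by simp
  qed
  have "independent (f ` S)"
  proof (rule independent_if_scalars_zero)
    show "finite (f ` S)" using S(1) by simp
  next
    fix c x assume sum: "(\<Sum>x\<in>f ` S. c x *s x) = 0" and "x \<in> f ` S"
    then obtain l where l: "l \<in> S" "x = f l" by blast
    have "\<forall>l\<in>S. c (f l) *s f l = 0"
    proof (rule eigenvectors_sum_eq_0[OF T S(1) inj_on_id2])
      show "\<forall>l\<in>S. c (f l) *s f l \<in> eigenspace scale T l"
        using f subspace_scale[OF subspace_eigenspace[OF T]] by blast
      show "(\<Sum>l\<in>S. c (f l) *s f l) = 0" using sum by (simp add: sum.reindex[OF inj])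
    qed
    then show "c x = 0" using f l by simp
  qed
  then have "card (f ` S) \<le> dimension"
    using independent_card_le_dim[of _ UNIV] by (simp add: dimension_def)
  then show False using S(2) by (simp add: card_image[OF inj])
qed

lemma eigenvalue_run:
  assumes T: "Vector_Spaces.linear scale scale T" and l: "eigenvalue scale T l" "l \<noteq> 0"
    and r: "r \<noteq> 0" "\<forall>n::nat. n > 0 \<longrightarrow> r ^ n \<noteq> 1"
  obtains m where "\<forall>i\<le>m. eigenvalue scale T (l * r ^ i)"
    and "\<not> eigenvalue scale T (l * r ^ Suc m)"
proof -
  have "inj (\<lambda>i. l * r ^ i)"
    using inj_power_not_root_of_unity[OF r] l(2) unfolding inj_def by simp
  then have "infinite (range (\<lambda>i. l * r ^ i))"
    using finite_imageD infinite_UNIV_nat by blast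
  then have "\<not> range (\<lambda>i. l * r ^ i) \<subseteq> {l. eigenvalue scale T l}"
    using finite_subset finite_eigenvalues[OF T] by blast
  then obtain n where "\<not> eigenvalue scale T (l * r ^ n)" by blast
  moreover have "eigenvalue scale T (l * r ^ 0)" using l(1) by simp
  ultimately obtain m where "\<forall>i\<le>m. eigenvalue scale T (l * r ^ i)"
    and "\<not> eigenvalue scale T (l * r ^ Suc m)"
    using nat_maximal_run[where P = "\<lambda>i. eigenvalue scale T (l * r ^ i)"] by blast
  then show thesis by (rule that)
qed

lemma scalar_if_commutes_with_irreducible:
  assumes closed: "alg_closed_field TYPE('a)" and nontrivial: "(UNIV :: 'b set) \<noteq> {0}"
    and irreducible: "\<forall>W. subspace W \<and> (\<forall>g\<in>G. g ` W \<subseteq> W) \<longrightarrow> W = {0} \<or> W = UNIV"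
    and T: "Vector_Spaces.linear scale scale T"
    and commute: "\<forall>g\<in>G. Vector_Spaces.linear scale scale g \<and> (\<forall>v. T (g v) = g (T v))"
  obtains c where "\<forall>v. T v = c *s v"
proof -
  obtain c where c: "eigenvalue scale T c" using eigenvalue_exists[OF closed T nontrivial] .
  have "\<forall>g\<in>G. g ` eigenspace scale T c \<subseteq> eigenspace scale T c"
    using commute by (auto simp: eigenspace_def endo.linear_scale)
  then have "eigenspace scale T c = {0} \<or> eigenspace scale T c = UNIV"
    using irreducible subspace_eigenspace[OF T] by blast
  moreover have "eigenspace scale T c \<noteq> {0}"
    using c unfolding eigenvalue_def eigenspace_def by auto
  ultimately show thesis using that unfolding eigenspace_def by auto
qed

end

section \<open>Finite-dimensional irreducible modules\<close>

lemma fd_vector_space_finite_dimensional: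
  assumes "fd_vector_space scale"
  obtains Basis where "finite_dimensional_vector_space scale Basis"
proof -
  interpret vector_space scale using assms by (simp add: fd_vector_space_def)
  obtain S where S: "finite S" "span S = UNIV" using assms by (auto simp: fd_vector_space_def)
  obtain B where B: "B \<subseteq> S" "independent B" "S \<subseteq> span B"
    by (rule maximal_independent_subset[of S])
  have "span B = UNIV" using span_mono[OF B(3)] S(2) by (auto simp: span_span)
  then show thesis using that B(2) finite_subset[OF B(1) S(1)]
    by (simp add: finite_dimensional_vector_space_def finite_dimensional_vector_space_axioms_def
        vector_space_axioms)
qed

locale irreducible_U_module = finite_dimensional_vector_space scale Basis
  for scale :: "'k::field \<Rightarrow> 'v::ab_group_add \<Rightarrow> 'v" (infixr "*s" 75) and Basis +
  fixes q :: 'k and yp0 yp1 ym0 ym1 k0 k1 k0i k1i :: "'v \<Rightarrow> 'v"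
  assumes alg_closed: "alg_closed_field TYPE('k)"
    and q_nonzero: "q \<noteq> 0" and q_not_root_of_unity: "\<forall>n::nat. n > 0 \<longrightarrow> q ^ n \<noteq> 1"
    and U_module: "U_module scale q yp0 yp1 ym0 ym1 k0 k1 k0i k1i"
    and U_irreducible: "U_irreducible scale yp0 yp1 ym0 ym1 k0 k1 k0i k1i"
begin

interpretation endo: vector_space_pair scale scale ..

abbreviation generators :: "('v \<Rightarrow> 'v) set" where
  "generators \<equiv> {yp0, yp1, ym0, ym1, k0, k1, k0i, k1i}"

abbreviation weight_space :: "'k \<Rightarrow> 'v set" where
  "weight_space \<equiv> eigenspace scale k0"

lemma linear_generators: "g \<in> generators \<Longrightarrow> Vector_Spaces.linear scale scale g"
  using U_module unfolding U_module_def by blast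

lemma k0i_k0 [simp]: "k0i (k0 v) = v" and k1i_k1 [simp]: "k1i (k1 v) = v"
  using U_module unfolding U_module_def by (simp_all add: fun_eq_iff)

lemma k0_k1_commute:
  assumes "g \<in> generators" shows "k0 (k1 (g v)) = g (k0 (k1 v))"
proof -
  have "(k0 \<circ> k1) \<circ> g = g \<circ> (k0 \<circ> k1)" using U_module assms unfolding U_module_def by blast
  then show ?thesis by (simp add: fun_eq_iff)
qed

lemma q_minus_inverse_nonzero: "q - inverse q \<noteq> 0"
proof
  assume "q - inverse q = 0"
  then have "q ^ 2 = 1" using q_nonzero by (simp add: field_simps power2_eq_square)
  then show False using q_not_root_of_unity[rule_format, of 2] by simp
qed

lemma nontrivial: "(UNIV :: 'v set) \<noteq> {0}"
  using U_irreducible unfolding U_irreducible_def by blast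

lemma irreducible:
  "\<forall>W. subspace W \<and> (\<forall>g\<in>generators. g ` W \<subseteq> W) \<longrightarrow> W = {0} \<or> W = UNIV"
  using U_irreducible unfolding U_irreducible_def by blast

definition central_scalar :: 'k where
  "central_scalar = (SOME c. \<forall>v. k0 (k1 v) = c *s v)"

lemma k0_k1_scalar: "k0 (k1 v) = central_scalar *s v"
proof -
  have "Vector_Spaces.linear scale scale k1" "Vector_Spaces.linear scale scale k0"
    by (simp_all add: linear_generators)
  then have "Vector_Spaces.linear scale scale (k0 \<circ> k1)" by (rule Vector_Spaces.linear_compose)
  moreover have "\<forall>g\<in>generators. Vector_Spaces.linear scale scale g \<and> (\<forall>v. (k0 \<circ> k1) (g v) = g ((k0 \<circ> k1) v))"
    using linear_generators k0_k1_commute by simp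
  ultimately obtain c where "\<forall>v. (k0 \<circ> k1) v = c *s v"
    using scalar_if_commutes_with_irreducible[OF alg_closed nontrivial irreducible] by blast
  then have "\<forall>v. k0 (k1 v) = c *s v" by simp
  then have "\<forall>v. k0 (k1 v) = central_scalar *s v" unfolding central_scalar_def by (rule someI)
  then show ?thesis ..
qed

lemma central_scalar_nonzero: "central_scalar \<noteq> 0"
proof
  assume "central_scalar = 0"
  obtain v :: 'v where "v \<noteq> 0" using nontrivial by auto
  have "v = k1i (k0i (k0 (k1 v)))" by simp
  also have "\<dots> = 0"
    using \<open>central_scalar = 0\<close> linear_generators[of k0i] linear_generators[of k1i]
    by (simp add: k0_k1_scalar endo.linear_0)
  finally show False using \<open>v \<noteq> 0\<close> by simp
qed

lemma k1_k0_scalar: "k1 (k0 v) = central_scalar *s v"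
proof -
  have "k1 (k0 v) = k0i (k0 (k1 (k0 v)))" by simp
  also have "\<dots> = k0i (k0 (central_scalar *s v))"
    using linear_generators[of k0] by (simp add: k0_k1_scalar endo.linear_scale)
  finally show ?thesis by simp
qed

lemma eigenvalue_k0_nonzero:
  assumes "eigenvalue scale k0 l" shows "l \<noteq> 0"
proof
  assume "l = 0"
  obtain v where "v \<noteq> 0" "k0 v = l *s v" using assms unfolding eigenvalue_def by blast
  then have "v = k0i 0" using \<open>l = 0\<close> k0i_k0[of v] by simp
  also have "\<dots> = 0" using linear_generators[of k0i] by (simp add: endo.linear_0)
  finally show False using \<open>v \<noteq> 0\<close> by simp
qed

lemma eigenspace_k1_eq_weight_space:
  assumes "l \<noteq> 0" shows "eigenspace scale k1 (central_scalar / l) = weight_space l"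
proof (intro equalityI subsetI)
  fix v assume "v \<in> weight_space l"
  then have "v = inverse l *s k0 v" using assms by (simp add: eigenspace_def)
  then have "k1 v = inverse l *s k1 (k0 v)"
    using linear_generators[of k1] by (metis endo.linear_scale insertCI)
  then show "v \<in> eigenspace scale k1 (central_scalar / l)"
    by (simp add: eigenspace_def k1_k0_scalar divide_inverse mult.commute)
next
  fix v assume "v \<in> eigenspace scale k1 (central_scalar / l)"
  then have "central_scalar *s v = (central_scalar / l) *s k0 v"
    using linear_generators[of k0] by (simp add: eigenspace_def flip: k0_k1_scalar endo.linear_scale)
  then have "(l / central_scalar) *s (central_scalar *s v) = k0 v"
    using assms central_scalar_nonzero by simp
  then show "v \<in> weight_space l"
    using assms central_scalar_nonzero by (simp add: eigenspace_def)
qed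

lemma inverse_q_minus_q_nonzero: "inverse q - inverse (inverse q) \<noteq> 0"
  using q_minus_inverse_nonzero by (simp add: right_minus_eq)

lemma qrel_generators:
  "qrel scale q yp0 k0 id" "qrel scale (inverse q) ym0 k0 id"
  "qrel scale q yp1 k1 id" "qrel scale (inverse q) ym1 k1 id"
  using U_module unfolding U_module_def by (simp_all add: qrel_swap[of q k0] qrel_swap[of q k1])

lemma yp0_shift:
  "v \<in> weight_space l \<Longrightarrow> l \<noteq> 0 \<Longrightarrow> yp0 v - inverse l *s v \<in> weight_space (l * q^2)"
  by (rule qrel_eigenspace_shift[OF qrel_generators(1) q_minus_inverse_nonzero
        linear_generators[of yp0, simplified] linear_generators[of k0, simplified]])

lemma ym0_shift:
  assumes "v \<in> weight_space l" and "l \<noteq> 0"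
  shows "ym0 v - inverse l *s v \<in> weight_space (l / q^2)"
proof -
  have "l * inverse q ^ 2 = l / q^2" by (simp add: field_simps)
  then show ?thesis
    using qrel_eigenspace_shift[OF qrel_generators(2) inverse_q_minus_q_nonzero
        linear_generators[of ym0, simplified] linear_generators[of k0, simplified] assms]
    by simp
qed

lemma yp1_shift:
  assumes "v \<in> weight_space l" and "l \<noteq> 0"
  shows "yp1 v - (l / central_scalar) *s v \<in> weight_space (l / q^2)"
proof -
  have "v \<in> eigenspace scale k1 (central_scalar / l)"
    using assms by (simp add: eigenspace_k1_eq_weight_space)
  then have "yp1 v - inverse (central_scalar / l) *s v \<in> eigenspace scale k1 (central_scalar / l * q^2)"
    using central_scalar_nonzero assms(2)
    by (intro qrel_eigenspace_shift[OF qrel_generators(3) q_minus_inverse_nonzero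
        linear_generators[of yp1, simplified] linear_generators[of k1, simplified]]) simp_all
  also have "central_scalar / l * q^2 = central_scalar / (l / q^2)" by simp
  also have "eigenspace scale k1 \<dots> = weight_space (l / q^2)"
    using assms(2) q_nonzero by (intro eigenspace_k1_eq_weight_space) simp
  finally show ?thesis by simp
qed

lemma ym1_shift:
  assumes "v \<in> weight_space l" and "l \<noteq> 0"
  shows "ym1 v - (l / central_scalar) *s v \<in> weight_space (l * q^2)"
proof -
  have "v \<in> eigenspace scale k1 (central_scalar / l)"
    using assms by (simp add: eigenspace_k1_eq_weight_space)
  then have "ym1 v - inverse (central_scalar / l) *s v
      \<in> eigenspace scale k1 (central_scalar / l * inverse q ^ 2)"
    using central_scalar_nonzero assms(2)
    by (intro qrel_eigenspace_shift[OF qrel_generators(4) inverse_q_minus_q_nonzero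
        linear_generators[of ym1, simplified] linear_generators[of k1, simplified]]) simp_all
  also have "central_scalar / l * inverse q ^ 2 = central_scalar / (l * q^2)"
    by (simp add: field_simps)
  also have "eigenspace scale k1 \<dots> = weight_space (l * q^2)"
    using assms(2) q_nonzero by (intro eigenspace_k1_eq_weight_space) simp
  finally show ?thesis by simp
qed

lemma generator_maps_weight_space_into:
  assumes g: "g \<in> generators" and v: "v \<in> weight_space l" and l: "l \<noteq> 0"
    and W: "subspace W" "weight_space (l / q^2) \<subseteq> W" "weight_space l \<subseteq> W"
      "weight_space (l * q^2) \<subseteq> W"
  shows "g v \<in> W"
proof -
  have scaled: "c *s v \<in> W" for c using v W(1,3) subspace_scale by blast
  have shifted: "g v \<in> W" if "g v - c *s v \<in> W" for c
    using subspace_add[OF W(1) that scaled[of c]] by simp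
  have v_k1: "v \<in> eigenspace scale k1 (central_scalar / l)"
    using v l by (simp add: eigenspace_k1_eq_weight_space)
  have "central_scalar / l \<noteq> 0" using l central_scalar_nonzero by simp
  from g consider "g = yp0" | "g = yp1" | "g = ym0" | "g = ym1" | "g = k0" | "g = k1"
    | "g = k0i" | "g = k1i" by blast
  then show ?thesis
  proof cases
    case 1
    then show ?thesis using shifted[of "inverse l"] yp0_shift[OF v l] W(4) by blast
  next
    case 2
    then show ?thesis using shifted[of "l / central_scalar"] yp1_shift[OF v l] W(2) by blast
  next
    case 3
    then show ?thesis using shifted[of "inverse l"] ym0_shift[OF v l] W(2) by blast
  next
    case 4
    then show ?thesis using shifted[of "l / central_scalar"] ym1_shift[OF v l] W(4) by blast
  next
    case 5
    then show ?thesis using scaled[of l] v by (simp add: eigenspace_def)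
  next
    case 6
    then show ?thesis using scaled[of "central_scalar / l"] v_k1 by (simp add: eigenspace_def)
  next
    case 7
    have "k0i v = inverse l *s v"
      using eigenspace_left_inverse[OF linear_generators[of k0i, simplified] _ v l] by simp
    then show ?thesis using 7 scaled by simp
  next
    case 8
    have "k1i v = inverse (central_scalar / l) *s v"
      using eigenspace_left_inverse[OF linear_generators[of k1i, simplified] _ v_k1
          \<open>central_scalar / l \<noteq> 0\<close>] by simp
    then show ?thesis using 8 scaled by simp
  qed
qed

definition maximal_weight_string :: "'k \<Rightarrow> nat \<Rightarrow> bool" where
  "maximal_weight_string e d \<longleftrightarrow> e \<noteq> 0 \<and> (\<forall>i\<le>d. eigenvalue scale k0 (weight q e d i)) \<and>
     \<not> eigenvalue scale k0 (weight q e d 0 / q^2) \<and> \<not> eigenvalue scale k0 (weight q e d d * q^2)"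

lemma maximal_weight_string_exists:
  obtains e d where "maximal_weight_string e d"
proof -
  have k0: "Vector_Spaces.linear scale scale k0" by (simp add: linear_generators)
  obtain l where l: "eigenvalue scale k0 l" using eigenvalue_exists[OF alg_closed k0 nontrivial] .
  have q2: "q^2 \<noteq> 0" "\<forall>n::nat. n > 0 \<longrightarrow> (q^2) ^ n \<noteq> 1"
    using q_nonzero q_not_root_of_unity by (simp_all flip: power_mult)
  then have inverse_q2: "inverse (q^2) \<noteq> 0" "\<forall>n::nat. n > 0 \<longrightarrow> inverse (q^2) ^ n \<noteq> 1"
    by (simp_all add: power_inverse)
  \<comment> \<open>Walk down from \<open>l\<close> in steps of \<open>q\<^sup>-\<^sup>2\<close> to the bottom \<open>b\<close> of its string, then up from \<open>b\<close>.\<close>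
  obtain m where "\<forall>i\<le>m. eigenvalue scale k0 (l * inverse (q^2) ^ i)"
    and "\<not> eigenvalue scale k0 (l * inverse (q^2) ^ Suc m)"
    using eigenvalue_run[OF k0 l eigenvalue_k0_nonzero[OF l] inverse_q2] by blast
  moreover define b where "b = l * inverse (q^2) ^ m"
  moreover have "b / q^2 = l * inverse (q^2) ^ Suc m"
    by (simp only: b_def divide_inverse power_Suc2 mult.assoc)
  ultimately have b: "eigenvalue scale k0 b" "\<not> eigenvalue scale k0 (b / q^2)" by simp_all
  obtain d where "\<forall>i\<le>d. eigenvalue scale k0 (b * (q^2) ^ i)"
    and "\<not> eigenvalue scale k0 (b * (q^2) ^ Suc d)"
    using eigenvalue_run[OF k0 b(1) eigenvalue_k0_nonzero[OF b(1)] q2] by blast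
  then have "maximal_weight_string (b * q ^ d) d"
    using b eigenvalue_k0_nonzero[OF b(1)] q_nonzero
    by (simp add: maximal_weight_string_def weight_shift mult_ac)
  then show thesis by (rule that)
qed

lemma weight_space_above:
  assumes "maximal_weight_string e d" and "i \<le> d"
  shows "weight_space (weight q e d i * q^2) = (if i = d then {0} else weight_space (weight q e d (i + 1)))"
  using assms q_nonzero eigenspace_eq_0_iff[OF linear_generators[of k0, simplified]]
  by (simp add: maximal_weight_string_def weight_Suc)

lemma weight_space_below:
  assumes "maximal_weight_string e d" and "i \<le> d"
  shows "weight_space (weight q e d i / q^2) = (if i = 0 then {0} else weight_space (weight q e d (i - 1)))"
proof (cases i)
  case (Suc j)
  then show ?thesis using q_nonzero by (simp add: weight_Suc)
qed (use assms eigenspace_eq_0_iff[OF linear_generators[of k0, simplified]] in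
  \<open>simp add: maximal_weight_string_def\<close>)

lemma weight_spaces_span:
  assumes string: "maximal_weight_string e d"
  shows "\<exists>u. (\<forall>i\<le>d. u i \<in> weight_space (weight q e d i)) \<and> v = (\<Sum>i\<le>d. u i)"
proof -
  have k0: "Vector_Spaces.linear scale scale k0" by (simp add: linear_generators)
  define W where "W = {v. \<exists>u. (\<forall>i\<le>d. u i \<in> weight_space (weight q e d i)) \<and> v = (\<Sum>i\<le>d. u i)}"
  have W: "subspace W"
    unfolding W_def by (rule subspace_sum_family) (simp add: subspace_eigenspace[OF k0])
  have single: "weight_space (weight q e d i) \<subseteq> W" if "i \<le> d" for i
  proof
    fix x assume "x \<in> weight_space (weight q e d i)"
    then show "x \<in> W"
      unfolding W_def using that subspace_0[OF subspace_eigenspace[OF k0]]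
      by (intro CollectI exI[of _ "\<lambda>j. if j = i then x else 0"]) simp
  qed
  have zero: "{0} \<subseteq> W" using subspace_0[OF W] by simp
  have "g x \<in> W" if g: "g \<in> generators" and x: "x \<in> W" for g x
  proof -
    obtain u where u: "\<forall>i\<le>d. u i \<in> weight_space (weight q e d i)" "x = (\<Sum>i\<le>d. u i)"
      using x unfolding W_def by blast
    have "g x = (\<Sum>i\<le>d. g (u i))"
      using u(2) endo.linear_sum[OF linear_generators[OF g]] by simp
    also have "\<dots> \<in> W"
    proof (rule subspace_sum[OF W])
      fix i assume "i \<in> {..d}"
      then show "g (u i) \<in> W"
        using generator_maps_weight_space_into[OF g u(1)[rule_format] weight_nonzero[OF q_nonzero] W]
          single zero string weight_space_above[OF string] weight_space_below[OF string]
        by (simp add: maximal_weight_string_def)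
    qed
    finally show ?thesis .
  qed
  moreover obtain w where "w \<noteq> 0" "w \<in> weight_space (weight q e d 0)"
    using string unfolding maximal_weight_string_def eigenvalue_def eigenspace_def by auto
  then have "W \<noteq> {0}" using single[of 0] by auto
  ultimately have "W = UNIV" using irreducible W by blast
  then show ?thesis unfolding W_def by blast
qed

lemma weight_decomp_of_maximal_string:
  assumes string: "maximal_weight_string e d"
  shows "weight_decomp scale q k0 k1 e (central_scalar / e) d (\<lambda>i. weight_space (weight q e d i))"
  unfolding weight_decomp_def
proof (intro conjI ballI allI impI)
  show e: "e \<noteq> 0" and "central_scalar / e \<noteq> 0"
    using string central_scalar_nonzero by (simp_all add: maximal_weight_string_def)
  show "decomposition scale d (\<lambda>i. weight_space (weight q e d i))"
    using string weight_spaces_span[OF string]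
    by (intro decomposition_into_eigenspaces linear_generators inj_on_subset[OF inj_weight])
      (simp_all add: maximal_weight_string_def q_nonzero q_not_root_of_unity)
  fix i u assume "i \<le> d" and u: "u \<in> weight_space (weight q e d i)"
  then show "k0 u = (e * q powi (2 * int i - int d)) *s u" by (simp add: eigenspace_def weight_def)
  have "u \<in> eigenspace scale k1 (central_scalar / weight q e d i)"
    using u eigenspace_k1_eq_weight_space[OF weight_nonzero[OF q_nonzero e]] by simp
  then show "k1 u = (central_scalar / e * q powi (int d - 2 * int i)) *s u"
    by (simp add: eigenspace_def divide_inverse inverse_weight mult.assoc)
qed

lemma weight_decomp_eigenspaces:
  assumes wd: "weight_decomp scale q k0 k1 e0 e1 d U"
  shows "\<forall>i\<le>d. U i = weight_space (weight q e0 d i)"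
    and "eigenvalue scale k0 l \<longleftrightarrow> l \<in> weight q e0 d ` {..d}"
proof -
  have "e0 \<noteq> 0" and dec: "decomposition scale d U"
    using wd by (simp_all add: weight_decomp_def)
  have U: "\<forall>i\<le>d. U i \<subseteq> weight_space (weight q e0 d i)"
    using wd by (auto simp: weight_decomp_def eigenspace_def weight_def)
  have inj: "inj_on (weight q e0 d) {..d}"
    using inj_weight[OF q_nonzero q_not_root_of_unity \<open>e0 \<noteq> 0\<close>] by (rule inj_on_subset) simp
  show "\<forall>i\<le>d. U i = weight_space (weight q e0 d i)"
    and "eigenvalue scale k0 l \<longleftrightarrow> l \<in> weight q e0 d ` {..d}"
    using decomposition_eigenspaces_eq[OF linear_generators[of k0, simplified] inj dec U] by simp_all
qed

lemma weight_decomp_unique: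
  assumes wd: "weight_decomp scale q k0 k1 e0 e1 d U"
    and wd': "weight_decomp scale q k0 k1 e0' e1' d' U'"
  shows "e0' = e0 \<and> e1' = e1 \<and> d' = d \<and> (\<forall>i\<le>d. U' i = U i)"
proof -
  have "e0 \<noteq> 0" "e0' \<noteq> 0" using wd wd' by (simp_all add: weight_decomp_def)
  moreover have "weight q e0 d ` {..d} = weight q e0' d' ` {..d'}"
  proof (rule set_eqI)
    fix l show "l \<in> weight q e0 d ` {..d} \<longleftrightarrow> l \<in> weight q e0' d' ` {..d'}"
      using weight_decomp_eigenspaces(2)[OF wd, of l] weight_decomp_eigenspaces(2)[OF wd', of l]
      by simp
  qed
  ultimately have "e0 = e0' \<and> d = d'"
    by (rule weight_image_eq_imp_eq[OF q_nonzero q_not_root_of_unity])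
  then have same: "e0' = e0" "d' = d" by simp_all
  then have U: "\<forall>i\<le>d. U' i = U i"
    using weight_decomp_eigenspaces(1)[OF wd] weight_decomp_eigenspaces(1)[OF wd'] by simp
  have "subspace (U 0)" "U 0 \<noteq> {0}" using wd unfolding weight_decomp_def decomposition_def by auto
  then obtain x where x: "x \<in> U 0" "x \<noteq> 0" using subspace_0 by blast
  have x': "x \<in> U' 0" using x(1) U by simp
  have "k1 x = (e1 * q powi (int d - 2 * int 0)) *s x"
    using wd x(1) unfolding weight_decomp_def by blast
  moreover have "k1 x = (e1' * q powi (int d' - 2 * int 0)) *s x"
    using wd' x' unfolding weight_decomp_def by blast
  ultimately have "(e1' * q ^ d) *s x = (e1 * q ^ d) *s x" using same by simp
  then have "e1' = e1" using x(2) q_nonzero by simp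
  then show ?thesis using same U by simp
qed

lemma raising_lowering:
  assumes string: "maximal_weight_string e d" and i: "i \<le> d"
    and u: "u \<in> weight_space (weight q e d i)"
  shows "e *s yp0 u - q powi (int d - 2 * int i) *s u
      \<in> (if i = d then {0} else weight_space (weight q e d (i + 1)))"
    and "(central_scalar / e) *s ym1 u - q powi (2 * int i - int d) *s u
      \<in> (if i = d then {0} else weight_space (weight q e d (i + 1)))"
    and "e *s ym0 u - q powi (int d - 2 * int i) *s u
      \<in> (if i = 0 then {0} else weight_space (weight q e d (i - 1)))"
    and "(central_scalar / e) *s yp1 u - q powi (2 * int i - int d) *s u
      \<in> (if i = 0 then {0} else weight_space (weight q e d (i - 1)))"
proof -
  let ?l = "weight q e d i"
  have e: "e \<noteq> 0" using string by (simp add: maximal_weight_string_def)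
  have l: "?l \<noteq> 0" using weight_nonzero[OF q_nonzero e] .
  have scaled: "c *s x \<in> weight_space m" if "x \<in> weight_space m" for c x m
    using subspace_scale[OF subspace_eigenspace[OF linear_generators[of k0, simplified]] that] .
  have factor0: "e * inverse ?l = q powi (int d - 2 * int i)"
    using e by (simp add: inverse_weight)
  have factor1: "central_scalar / e * (?l / central_scalar) = q powi (2 * int i - int d)"
    using e central_scalar_nonzero by (simp add: weight_div)
  have "e *s yp0 u - q powi (int d - 2 * int i) *s u = e *s (yp0 u - inverse ?l *s u)"
    by (simp add: scale_right_diff_distrib factor0)
  then show "e *s yp0 u - q powi (int d - 2 * int i) *s u
      \<in> (if i = d then {0} else weight_space (weight q e d (i + 1)))"
    using scaled[OF yp0_shift[OF u l]] weight_space_above[OF string i] by simp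
  have "(central_scalar / e) *s ym1 u - q powi (2 * int i - int d) *s u
      = (central_scalar / e) *s (ym1 u - (?l / central_scalar) *s u)"
    by (simp only: scale_right_diff_distrib scale_scale factor1)
  then show "(central_scalar / e) *s ym1 u - q powi (2 * int i - int d) *s u
      \<in> (if i = d then {0} else weight_space (weight q e d (i + 1)))"
    using scaled[OF ym1_shift[OF u l]] weight_space_above[OF string i] by simp
  have "e *s ym0 u - q powi (int d - 2 * int i) *s u = e *s (ym0 u - inverse ?l *s u)"
    by (simp add: scale_right_diff_distrib factor0)
  then show "e *s ym0 u - q powi (int d - 2 * int i) *s u
      \<in> (if i = 0 then {0} else weight_space (weight q e d (i - 1)))"
    using scaled[OF ym0_shift[OF u l]] weight_space_below[OF string i] by simp
  have "(central_scalar / e) *s yp1 u - q powi (2 * int i - int d) *s u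
      = (central_scalar / e) *s (yp1 u - (?l / central_scalar) *s u)"
    by (simp only: scale_right_diff_distrib scale_scale factor1)
  then show "(central_scalar / e) *s yp1 u - q powi (2 * int i - int d) *s u
      \<in> (if i = 0 then {0} else weight_space (weight q e d (i - 1)))"
    using scaled[OF yp1_shift[OF u l]] weight_space_below[OF string i] by simp
qed

end

theorem lemma14p1:
  fixes scale :: "'k::field \<Rightarrow> 'v::ab_group_add \<Rightarrow> 'v"
    and q :: 'k
    and yp0 yp1 ym0 ym1 k0 k1 k0i k1i :: "'v \<Rightarrow> 'v"
  assumes "alg_closed_field TYPE('k)"
    and "q \<noteq> 0" and "\<forall>n::nat. n > 0 \<longrightarrow> q ^ n \<noteq> 1"
    and "fd_vector_space scale"
    and "U_module scale q yp0 yp1 ym0 ym1 k0 k1 k0i k1i"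
    and "U_irreducible scale yp0 yp1 ym0 ym1 k0 k1 k0i k1i"
  shows "\<exists>e0 e1 d U.
    weight_decomp scale q k0 k1 e0 e1 d U \<and>
    (\<forall>e0' e1' d' U'. weight_decomp scale q k0 k1 e0' e1' d' U' \<longrightarrow>
        e0' = e0 \<and> e1' = e1 \<and> d' = d \<and> (\<forall>i\<le>d. U' i = U i)) \<and>
    (\<forall>i\<le>d. \<forall>u\<in>U i.
        scale e0 (yp0 u) - scale (q powi (int d - 2 * int i)) u \<in> (if i = d then {0} else U (i + 1)) \<and>
        scale e1 (ym1 u) - scale (q powi (2 * int i - int d)) u \<in> (if i = d then {0} else U (i + 1)) \<and>
        scale e0 (ym0 u) - scale (q powi (int d - 2 * int i)) u \<in> (if i = 0 then {0} else U (i - 1)) \<and>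
        scale e1 (yp1 u) - scale (q powi (2 * int i - int d)) u \<in> (if i = 0 then {0} else U (i - 1)))"
proof -
  obtain Basis where "finite_dimensional_vector_space scale Basis"
    using fd_vector_space_finite_dimensional[OF assms(4)] .
  then interpret irreducible_U_module scale Basis q yp0 yp1 ym0 ym1 k0 k1 k0i k1i
    using assms by (simp add: irreducible_U_module_def irreducible_U_module_axioms_def)
  obtain e d where string: "maximal_weight_string e d" by (rule maximal_weight_string_exists)
  have wd: "weight_decomp scale q k0 k1 e (central_scalar / e) d (\<lambda>i. weight_space (weight q e d i))"
    by (rule weight_decomp_of_maximal_string[OF string])
  show ?thesis
  proof (intro exI conjI)
    show "weight_decomp scale q k0 k1 e (central_scalar / e) d (\<lambda>i. weight_space (weight q e d i))"
      by (fact wd)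
    show "\<forall>e0' e1' d' U'. weight_decomp scale q k0 k1 e0' e1' d' U' \<longrightarrow>
        e0' = e \<and> e1' = central_scalar / e \<and> d' = d \<and> (\<forall>i\<le>d. U' i = weight_space (weight q e d i))"
      using weight_decomp_unique[OF wd] by blast
  qed (use raising_lowering[OF string] in blast)
qed

end
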